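(* Let $a,x\in \mathcal{A}$. Then the following are equivalent: (1) $x$ is the $w$-weighted core inverse of $a$. (2) $a(wx)^2=x$, $xw(aw)^2=aw$, $[(waw)x]^*=(waw)x$, $(waw)x(waw)=waw$, $x(waw)x=x$.
   Context: $\mathcal{A}$ is a complex Banach *-algebra with identity and $w\in\mathcal{A}$. The $w$-weighted core inverse of $a$ is the unique $x$ with $a(wx)^2=x$, $(wawx)^*=wawx$, $xw(aw)^2=aw$. *)

theory Defs
  imports "HOL-Analysis.Analysis"
begin

class complex_banach_star_algebra_1 = real_normed_algebra_1 + banach +
  fixes scaleC :: "complex \<Rightarrow> 'a \<Rightarrow> 'a"
    and invol :: "'a \<Rightarrow> 'a"
  assumes scaleC_scaleR: "scaleC (complex_of_real r) x = scaleR r x"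
    and scaleC_add_right: "scaleC c (x + y) = scaleC c x + scaleC c y"
    and scaleC_add_left: "scaleC (c + d) x = scaleC c x + scaleC d x"
    and scaleC_scaleC: "scaleC c (scaleC d x) = scaleC (c * d) x"
    and scaleC_one: "scaleC 1 x = x"
    and scaleC_mult_left: "scaleC c x * y = scaleC c (x * y)"
    and scaleC_mult_right: "x * scaleC c y = scaleC c (x * y)"
    and norm_scaleC: "norm (scaleC c x) = cmod c * norm x"
    and invol_invol: "invol (invol x) = x"
    and invol_add: "invol (x + y) = invol x + invol y"
    and invol_mult: "invol (x * y) = invol y * invol x"
    and invol_scaleC: "invol (scaleC c x) = scaleC (cnj c) (invol x)"

definition w_core_inverse ::
  "'a::complex_banach_star_algebra_1 \<Rightarrow> 'a \<Rightarrow> 'a \<Rightarrow> bool" where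
  "w_core_inverse w a x \<longleftrightarrow>
     a * (w * x)^2 = x \<and>
     invol (w * a * w * x) = w * a * w * x \<and>
     x * w * (a * w)^2 = a * w"

end

theory Submission
  imports Defs
begin

text \<open>Put \<open>b = w a\<close> and \<open>y = w x\<close>. Multiplying the first and third defining equations by \<open>w\<close>
  on the left gives \<open>y = b y y\<close> and \<open>y b b w = b w\<close>. Reassociating, these yield \<open>b y b w = b w\<close>
  and \<open>y b y = y\<close>, which are the equations \<open>(waw) x (waw) = waw\<close> and \<open>x (waw) x = x\<close> in
  disguise.\<close>

lemma weighted_core_eqs_imp_inner_reflexive:
  fixes w a x :: "'a::semigroup_mult"
  assumes first: "a * (w * x) * (w * x) = x"
    and third: "x * w * (a * w) * (a * w) = a * w"
  shows "w * a * w * x * (w * a * w) = w * a * w"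
    and "x * (w * a * w) * x = x"
proof -
  define b where "b = w * a"
  define y where "y = w * x"
  have x_eq: "x = a * y * y"
    using first by (simp add: y_def)
  have y_eq: "y = b * y * y"
    using arg_cong[OF first, of "(*) w"] by (simp add: b_def y_def mult.assoc)
  have bw_eq: "y * b * b * w = b * w"
    using arg_cong[OF third, of "(*) w"] by (simp add: b_def y_def mult.assoc)
  have "b * y * b * w = (b * y * y) * b * b * w"
    using bw_eq by (simp add: mult.assoc)
  also have "\<dots> = b * w"
    using y_eq bw_eq by simp
  finally show "w * a * w * x * (w * a * w) = w * a * w"
    by (simp add: b_def y_def mult.assoc)
  have "y * b * b * y = b * y"
    using arg_cong[OF bw_eq, of "\<lambda>t. t * x"] by (simp add: y_def mult.assoc)
  then have yby: "y * b * y = y"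
    using y_eq by (metis mult.assoc)
  have "x * b * y = a * y * (y * b * y)"
    using x_eq by (simp add: mult.assoc)
  also have "\<dots> = x"
    using yby x_eq by simp
  finally show "x * (w * a * w) * x = x"
    by (simp add: b_def y_def mult.assoc)
qed

theorem corollary2p3:
  fixes w a x :: "'a::complex_banach_star_algebra_1"
  shows "w_core_inverse w a x \<longleftrightarrow>
    (a * (w * x)^2 = x \<and>
     x * w * (a * w)^2 = a * w \<and>
     invol ((w * a * w) * x) = (w * a * w) * x \<and>
     (w * a * w) * x * (w * a * w) = w * a * w \<and>
     x * (w * a * w) * x = x)"
  using weighted_core_eqs_imp_inner_reflexive[of a w x]
  unfolding w_core_inverse_def power2_eq_square mult.assoc[symmetric]
  by blast

end
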